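(* Let $S$ and $T$ be maps (each with finitely many points of period dividing $n$ for every $n\ge1$) such that the Cartesian product $S\times T$ satisfies $\mathcal O_{S\times T}(n)=1$ for all $n\ge1$. Then there is a set $P$ of primes such that $\mathcal O_T=s_P$ and $\mathcal O_S=s_{P^c}$, where $P^c$ is the set of primes not in $P$.
   Context: For a map $T:X\to X$, $\mathcal O_T(n)$ denotes the number of closed orbits of length $n$ under $T$ (sets $\{x,Tx,\dots,T^{n-1}x\}$ with $T^nx=x$ of cardinality exactly $n$). For a set $P$ of primes, $s_P$ is the sequence with $s_P(n)=0$ if $p\mid n$ for some $p\in P$, and $s_P(n)=1$ otherwise. *)

theory Defs
  imports "HOL-Computational_Algebra.Primes"
begin

definition orbit_seg :: "('a \<Rightarrow> 'a) \<Rightarrow> 'a \<Rightarrow> nat \<Rightarrow> 'a set" where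
  "orbit_seg T x n = {(T ^^ k) x | k. k < n}"

definition closed_orbits :: "('a \<Rightarrow> 'a) \<Rightarrow> nat \<Rightarrow> 'a set set" where
  "closed_orbits T n = {orbit_seg T x n | x. (T ^^ n) x = x \<and> card (orbit_seg T x n) = n}"

definition orbit_count :: "('a \<Rightarrow> 'a) \<Rightarrow> nat \<Rightarrow> nat" where
  "orbit_count T n = card (closed_orbits T n)"

definition finite_periodic :: "('a \<Rightarrow> 'a) \<Rightarrow> bool" where
  "finite_periodic T \<longleftrightarrow> (\<forall>n\<ge>1. finite {x. (T ^^ n) x = x})"

definition prod_map :: "('a \<Rightarrow> 'a) \<Rightarrow> ('b \<Rightarrow> 'b) \<Rightarrow> ('a \<times> 'b \<Rightarrow> 'a \<times> 'b)" where
  "prod_map S T = (\<lambda>(x, y). (S x, T y))"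

definition s_seq :: "nat set \<Rightarrow> nat \<Rightarrow> nat" where
  "s_seq P n = (if \<exists>p\<in>P. p dvd n then 0 else 1)"

end

theory Submission
  imports Defs
begin

text \<open>
  If x has minimal period a under S and y has minimal period b under T, then (x, y) has minimal
  period lcm a b under S \<times> T. Were gcd a b > 1, the points (x, y) and (x, T y) would lie on two
  distinct closed orbits of that length; so every period of S is coprime to every period of T, and
  since every n is the minimal period of some point of S \<times> T, every n factors as n = a b with a a
  period of S and b a period of T. Hence each prime is a period of exactly one of the two maps, and
  with P the primes that are periods of S, the periods of T are the n without prime factors in P,
  those of S the n without prime factors outside P. Pairing with a fixed point embeds S and T into
  S \<times> T, so neither has two closed orbits of the same length.
\<close>

definition minimal_period :: "('a \<Rightarrow> 'a) \<Rightarrow> 'a \<Rightarrow> nat \<Rightarrow> bool" where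
  "minimal_period T x n \<longleftrightarrow>
     0 < n \<and> (T ^^ n) x = x \<and> (\<forall>k. 0 < k \<longrightarrow> k < n \<longrightarrow> (T ^^ k) x \<noteq> x)"

lemma minimal_period_dvd_iff:
  assumes "minimal_period T x n"
  shows "(T ^^ m) x = x \<longleftrightarrow> n dvd m"
proof
  assume "(T ^^ m) x = x"
  with assms have "(T ^^ (m mod n)) x = x"
    by (simp add: minimal_period_def funpow_mod_eq)
  with assms show "n dvd m"
    unfolding minimal_period_def by (meson dvd_eq_mod_eq_0 mod_less_divisor neq0_conv)
next
  assume "n dvd m"
  with assms show "(T ^^ m) x = x"
    by (metis funpow_0 funpow_mod_eq minimal_period_def dvd_eq_mod_eq_0)
qed

lemma minimal_period_iff_dvd:
  "minimal_period T x n \<longleftrightarrow> 0 < n \<and> (\<forall>m. (T ^^ m) x = x \<longleftrightarrow> n dvd m)"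
proof
  assume min: "minimal_period T x n"
  then show "0 < n \<and> (\<forall>m. (T ^^ m) x = x \<longleftrightarrow> n dvd m)"
    using minimal_period_dvd_iff[OF min] unfolding minimal_period_def by blast
next
  assume "0 < n \<and> (\<forall>m. (T ^^ m) x = x \<longleftrightarrow> n dvd m)"
  then show "minimal_period T x n"
    unfolding minimal_period_def by (meson dvd_refl nat_dvd_not_less)
qed

lemma minimal_period_unique:
  "minimal_period T x m \<Longrightarrow> minimal_period T x n \<Longrightarrow> m = n"
  by (meson dvd_antisym minimal_period_def minimal_period_dvd_iff)

lemma minimal_period_exists:
  assumes "0 < n" "(T ^^ n) x = x"
  obtains m where "minimal_period T x m"
proof
  let ?m = "LEAST k. 0 < k \<and> (T ^^ k) x = x"
  have "0 < ?m \<and> (T ^^ ?m) x = x"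
    by (rule LeastI[of _ n]) (use assms in simp)
  then show "minimal_period T x ?m"
    unfolding minimal_period_def using not_less_Least by blast
qed

lemma minimal_period_1_iff: "minimal_period T x 1 \<longleftrightarrow> T x = x"
  by (simp add: minimal_period_def)

lemma funpow_eq_funpow_pred_apply:
  "0 < n \<Longrightarrow> (T ^^ n) z = (T ^^ (n - 1)) (T z)"
  by (cases n) (simp_all add: funpow_Suc_right del: funpow.simps)

lemma funpow_apply_eq_self_iff:
  assumes "(T ^^ n) x = x" "0 < n"
  shows "(T ^^ m) (T x) = T x \<longleftrightarrow> (T ^^ m) x = x"
proof
  assume fixed: "(T ^^ m) (T x) = T x"
  have "(T ^^ m) x = (T ^^ m) ((T ^^ (n - 1)) (T x))"
    using assms funpow_eq_funpow_pred_apply by metis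
  also have "\<dots> = (T ^^ (n - 1)) ((T ^^ m) (T x))"
    by (metis add.commute comp_apply funpow_add)
  also have "\<dots> = x"
    using fixed assms funpow_eq_funpow_pred_apply by metis
  finally show "(T ^^ m) x = x" .
next
  assume "(T ^^ m) x = x"
  then show "(T ^^ m) (T x) = T x"
    by (metis funpow_swap1)
qed

lemma minimal_period_apply:
  assumes "minimal_period T x n"
  shows "minimal_period T (T x) n"
proof -
  have "0 < n" "(T ^^ n) x = x"
    using assms by (simp_all add: minimal_period_def)
  then have "(T ^^ m) (T x) = T x \<longleftrightarrow> n dvd m" for m
    using funpow_apply_eq_self_iff[where T = T and n = n and x = x and m = m]
      minimal_period_dvd_iff[OF assms] by simp
  with \<open>0 < n\<close> show ?thesis
    by (simp add: minimal_period_iff_dvd)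
qed

lemma orbit_seg_eq_image: "orbit_seg T x n = (\<lambda>k. (T ^^ k) x) ` {..<n}"
  by (auto simp: orbit_seg_def)

lemma inj_on_funpow_iff_minimal_period:
  assumes "(T ^^ n) x = x" "0 < n"
  shows "inj_on (\<lambda>k. (T ^^ k) x) {..<n} \<longleftrightarrow> minimal_period T x n"
proof
  assume inj: "inj_on (\<lambda>k. (T ^^ k) x) {..<n}"
  have "(T ^^ k) x \<noteq> x" if "0 < k" "k < n" for k
    using inj_onD[OF inj, of k 0] that assms(2) by auto
  with assms show "minimal_period T x n"
    by (simp add: minimal_period_def)
next
  assume min: "minimal_period T x n"
  have ordered: "i = j" if "i < j" "j < n" "(T ^^ i) x = (T ^^ j) x" for i j
  proof -
    have "(T ^^ (n - j + i)) x = (T ^^ (n - j)) ((T ^^ i) x)"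
      by (simp only: funpow_add comp_apply)
    also have "\<dots> = (T ^^ (n - j + j)) x"
      using that(3) by (simp only: funpow_add comp_apply)
    also have "\<dots> = x"
      using that(2) assms(1) by simp
    finally have "(T ^^ (n - j + i)) x = x" .
    moreover have "0 < n - j + i" "n - j + i < n"
      using that(1,2) by linarith+
    ultimately show "i = j"
      using min by (simp add: minimal_period_def)
  qed
  show "inj_on (\<lambda>k. (T ^^ k) x) {..<n}"
  proof (rule inj_onI)
    fix i j assume "i \<in> {..<n}" "j \<in> {..<n}" "(T ^^ i) x = (T ^^ j) x"
    then show "i = j"
      using ordered[of i j] ordered[of j i] by (cases i j rule: linorder_cases) auto
  qed
qed

lemma card_image_lessThan_eq_iff: "card (f ` {..<n}) = n \<longleftrightarrow> inj_on f {..<n}"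
proof
  assume "card (f ` {..<n}) = n"
  then show "inj_on f {..<n}"
    by (intro eq_card_imp_inj_on) simp_all
qed (simp add: card_image)

lemma card_orbit_seg_eq_iff:
  assumes "(T ^^ n) x = x" "0 < n"
  shows "card (orbit_seg T x n) = n \<longleftrightarrow> minimal_period T x n"
  by (simp add: orbit_seg_eq_image card_image_lessThan_eq_iff
      inj_on_funpow_iff_minimal_period[OF assms])

lemma closed_orbits_eq:
  assumes "0 < n"
  shows "closed_orbits T n = (\<lambda>x. orbit_seg T x n) ` {x. minimal_period T x n}"
proof -
  have "(T ^^ n) x = x \<and> card (orbit_seg T x n) = n \<longleftrightarrow> minimal_period T x n" for x
    using card_orbit_seg_eq_iff[where T = T and x = x, OF _ assms]
    unfolding minimal_period_def by blast
  then show ?thesis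
    unfolding closed_orbits_def by blast
qed

lemma closed_orbits_eq_empty_iff:
  "0 < n \<Longrightarrow> closed_orbits T n = {} \<longleftrightarrow> (\<nexists>x. minimal_period T x n)"
  by (simp add: closed_orbits_eq)

lemma orbit_count_eq_if_le_1:
  assumes "0 < n" "finite (closed_orbits T n)" "orbit_count T n \<le> 1"
  shows "orbit_count T n = (if \<exists>x. minimal_period T x n then 1 else 0)"
proof (cases "closed_orbits T n = {}")
  case True
  then show ?thesis
    using closed_orbits_eq_empty_iff[OF assms(1), where T = T] by (simp add: orbit_count_def)
next
  case False
  then have "orbit_count T n = 1"
    using assms(2,3) card_gt_0_iff[of "closed_orbits T n"] unfolding orbit_count_def by linarith
  with False show ?thesis
    using closed_orbits_eq_empty_iff[OF assms(1), where T = T] by simp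
qed

lemma closed_orbits_embedding:
  assumes "inj \<sigma>" "\<And>x. Q (\<sigma> x) = \<sigma> (S x)" "finite (closed_orbits Q n)"
  shows "finite (closed_orbits S n)" and "orbit_count S n \<le> orbit_count Q n"
proof -
  have semiconj: "(Q ^^ k) (\<sigma> x) = \<sigma> ((S ^^ k) x)" for k x
    by (induction k) (simp_all add: assms(2))
  have orbit: "orbit_seg Q (\<sigma> x) n = \<sigma> ` orbit_seg S x n" for x
    by (simp add: orbit_seg_eq_image image_image semiconj)
  have "\<sigma> ` C \<in> closed_orbits Q n" if C: "C \<in> closed_orbits S n" for C
  proof -
    obtain x where x: "C = orbit_seg S x n" "(S ^^ n) x = x" "card C = n"
      using C by (auto simp: closed_orbits_def)
    have "card (\<sigma> ` C) = n"
      using card_image[OF inj_on_subset[OF assms(1) subset_UNIV]] x(3) by simp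
    moreover have "(Q ^^ n) (\<sigma> x) = \<sigma> x"
      using x(2) semiconj by simp
    ultimately show ?thesis
      unfolding closed_orbits_def x(1) orbit[symmetric] by blast
  qed
  then have into: "(\<lambda>C. \<sigma> ` C) ` closed_orbits S n \<subseteq> closed_orbits Q n"
    by blast
  have inj: "inj_on (\<lambda>C. \<sigma> ` C) (closed_orbits S n)"
    using assms(1) by (simp add: inj_on_def inj_image_eq_iff)
  show "finite (closed_orbits S n)"
    using finite_imageD[OF finite_subset[OF into assms(3)] inj] .
  show "orbit_count S n \<le> orbit_count Q n"
    unfolding orbit_count_def using card_inj_on_le[OF inj into assms(3)] .
qed

lemma orbit_count_eq_if_embedded:
  assumes "0 < n" "inj \<sigma>" "\<And>x. Q (\<sigma> x) = \<sigma> (S x)" "orbit_count Q n = 1"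
  shows "orbit_count S n = (if \<exists>x. minimal_period S x n then 1 else 0)"
proof -
  have "finite (closed_orbits Q n)"
    using assms(4) card.infinite unfolding orbit_count_def by fastforce
  note embedding = closed_orbits_embedding[where \<sigma> = \<sigma> and Q = Q and S = S, OF assms(2,3) this]
  from embedding(2) assms(4) have "orbit_count S n \<le> 1"
    by simp
  with embedding(1) show ?thesis
    using orbit_count_eq_if_le_1[OF assms(1)] by blast
qed

lemma funpow_prod_map: "(prod_map S T ^^ k) (x, y) = ((S ^^ k) x, (T ^^ k) y)"
  by (induction k) (auto simp: prod_map_def)

lemma minimal_period_prod_map:
  assumes "minimal_period S x a" "minimal_period T y b"
  shows "minimal_period (prod_map S T) (x, y) (lcm a b)"
proof -
  have "(prod_map S T ^^ m) (x, y) = (x, y) \<longleftrightarrow> lcm a b dvd m" for m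
    using minimal_period_dvd_iff[OF assms(1)] minimal_period_dvd_iff[OF assms(2)]
    by (simp add: funpow_prod_map)
  moreover have "0 < lcm a b"
    using assms by (simp add: minimal_period_def lcm_pos_nat)
  ultimately show ?thesis
    by (simp add: minimal_period_iff_dvd)
qed

locale coprime_factorization =
  fixes A B :: "nat set"
  assumes coprime: "a \<in> A \<Longrightarrow> b \<in> B \<Longrightarrow> coprime a b"
    and factorization: "0 < n \<Longrightarrow> \<exists>a\<in>A. \<exists>b\<in>B. n = a * b"

lemma coprime_factorization_swap:
  "coprime_factorization A B \<Longrightarrow> coprime_factorization B A"
  unfolding coprime_factorization_def by (metis coprime_commute mult.commute)

context coprime_factorization
begin

lemma no_common_prime_divisor:
  assumes "a \<in> A" "b \<in> B" "prime p" "p dvd a" "p dvd b"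
  shows False
  using coprime_common_divisor_nat[OF coprime[OF assms(1,2)] assms(4,5)] assms(3) by simp

lemma prime_in_left_iff:
  assumes "prime p"
  shows "p \<in> A \<longleftrightarrow> p \<notin> B"
proof
  assume "p \<in> A"
  then show "p \<notin> B"
    using no_common_prime_divisor[of p p p] assms by auto
next
  assume "p \<notin> B"
  obtain a b where ab: "a \<in> A" "b \<in> B" "p = a * b"
    using factorization[OF prime_gt_0_nat[OF assms]] by blast
  then have "a = 1 \<or> b = 1"
    using assms prime_product by blast
  with ab \<open>p \<notin> B\<close> show "p \<in> A"
    by auto
qed

lemma right_mem_iff:
  assumes "0 < n"
  shows "n \<in> B \<longleftrightarrow> (\<nexists>p. prime p \<and> p \<in> A \<and> p dvd n)"
proof
  assume "n \<in> B"
  then show "\<nexists>p. prime p \<and> p \<in> A \<and> p dvd n"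
    using no_common_prime_divisor dvd_refl by blast
next
  assume no_prime: "\<nexists>p. prime p \<and> p \<in> A \<and> p dvd n"
  obtain a b where ab: "a \<in> A" "b \<in> B" "n = a * b"
    using factorization[OF assms] by blast
  have "a = 1"
  proof (rule ccontr)
    assume "a \<noteq> 1"
    then obtain p where p: "prime p" "p dvd a"
      using prime_factor_nat by blast
    with ab no_prime have "p \<notin> A"
      by auto
    with p(1) have "p \<in> B"
      using prime_in_left_iff by blast
    with ab(1) p show False
      using no_common_prime_divisor dvd_refl by blast
  qed
  with ab show "n \<in> B"
    by simp
qed

end

locale unique_product_orbits =
  fixes S :: "'a \<Rightarrow> 'a" and T :: "'b \<Rightarrow> 'b"
  assumes orbit_count_prod_map: "0 < n \<Longrightarrow> orbit_count (prod_map S T) n = 1"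
begin

lemma closed_orbits_prod_map_singleton:
  assumes "0 < n"
  obtains C where "closed_orbits (prod_map S T) n = {C}"
  using orbit_count_prod_map[OF assms] card_1_singleton_iff
  unfolding orbit_count_def by (metis One_nat_def)

lemma minimal_period_prod_map_exists:
  assumes "0 < n"
  obtains x y where "minimal_period (prod_map S T) (x, y) n"
  using closed_orbits_prod_map_singleton[OF assms] closed_orbits_eq_empty_iff[OF assms]
  by (metis insert_not_empty surj_pair)

lemma orbit_seg_prod_map_eq:
  assumes "minimal_period (prod_map S T) z n" "minimal_period (prod_map S T) w n"
  shows "orbit_seg (prod_map S T) z n = orbit_seg (prod_map S T) w n"
proof -
  have "0 < n"
    using assms(1) by (simp add: minimal_period_def)
  then show ?thesis
    using closed_orbits_prod_map_singleton closed_orbits_eq assms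
    by (metis image_eqI mem_Collect_eq singletonD)
qed

lemma fixed_points_exist:
  obtains x0 y0 where "S x0 = x0" "T y0 = y0"
proof -
  obtain x y where "minimal_period (prod_map S T) (x, y) 1"
    by (rule minimal_period_prod_map_exists[OF zero_less_one])
  then have "S x = x" "T y = y"
    unfolding minimal_period_1_iff by (simp_all add: prod_map_def)
  then show ?thesis
    using that by blast
qed

lemma orbit_count_left:
  assumes "0 < n"
  shows "orbit_count S n = (if \<exists>x. minimal_period S x n then 1 else 0)"
proof -
  obtain y0 where "T y0 = y0"
    using fixed_points_exist by blast
  then have "prod_map S T (x, y0) = (S x, y0)" for x
    by (simp add: prod_map_def)
  moreover have "inj (\<lambda>x. (x, y0))"
    by (simp add: inj_on_def)
  ultimately show ?thesis
    using orbit_count_eq_if_embedded[OF assms, where \<sigma> = "\<lambda>x. (x, y0)" and Q = "prod_map S T"]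
      orbit_count_prod_map[OF assms] by blast
qed

lemma orbit_count_right:
  assumes "0 < n"
  shows "orbit_count T n = (if \<exists>y. minimal_period T y n then 1 else 0)"
proof -
  obtain x0 where "S x0 = x0"
    using fixed_points_exist by blast
  then have "prod_map S T (x0, y) = (x0, T y)" for y
    by (simp add: prod_map_def)
  moreover have "inj (Pair x0)"
    by (simp add: inj_on_def)
  ultimately show ?thesis
    using orbit_count_eq_if_embedded[OF assms, where \<sigma> = "Pair x0" and Q = "prod_map S T"]
      orbit_count_prod_map[OF assms] by blast
qed

lemma coprime_minimal_periods:
  assumes "minimal_period S x a" "minimal_period T y b"
  shows "coprime a b"
proof -
  let ?L = "lcm a b"
  have xy: "minimal_period (prod_map S T) (x, y) ?L"
    using minimal_period_prod_map[OF assms] .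
  have xTy: "minimal_period (prod_map S T) (x, T y) ?L"
    using minimal_period_prod_map[OF assms(1) minimal_period_apply[OF assms(2)]] .
  have "0 < ?L"
    using xy by (simp add: minimal_period_def)
  then have "(x, T y) \<in> orbit_seg (prod_map S T) (x, T y) ?L"
    unfolding orbit_seg_eq_image by (intro rev_image_eqI[of 0]) simp_all
  then have "(x, T y) \<in> orbit_seg (prod_map S T) (x, y) ?L"
    using orbit_seg_prod_map_eq[OF xy xTy] by simp
  \<comment> \<open>so some k is \<open>0 mod a\<close> and \<open>1 mod b\<close>\<close>
  then obtain k where "(prod_map S T ^^ k) (x, y) = (x, T y)"
    unfolding orbit_seg_eq_image by auto
  then have Sk: "(S ^^ k) x = x" and Tk: "(T ^^ k) y = T y"
    by (simp_all add: funpow_prod_map)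
  have "0 < b"
    using assms(2) by (simp add: minimal_period_def)
  have "(T ^^ (b - 1 + k)) y = (T ^^ (b - 1)) (T y)"
    by (simp only: funpow_add comp_apply Tk)
  also have "\<dots> = y"
    using funpow_eq_funpow_pred_apply[where T = T and n = b and z = y] \<open>0 < b\<close> assms(2)
    by (simp add: minimal_period_def)
  finally have "b dvd b - 1 + k"
    using minimal_period_dvd_iff[OF assms(2)] by simp
  moreover have "a dvd k"
    using minimal_period_dvd_iff[OF assms(1)] Sk by simp
  ultimately have "gcd a b dvd (b + k) - (b - 1 + k)"
    by (meson dvd_add dvd_diff_nat dvd_trans gcd_dvd1 gcd_dvd2 dvd_refl)
  with \<open>0 < b\<close> show ?thesis
    by (simp add: coprime_iff_gcd_eq_1)
qed

lemma minimal_period_factorization: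
  assumes "0 < n"
  obtains a b x y where "minimal_period S x a" "minimal_period T y b" "n = a * b"
proof -
  obtain x y where xy: "minimal_period (prod_map S T) (x, y) n"
    using minimal_period_prod_map_exists[OF assms] .
  then have "(S ^^ n) x = x" "(T ^^ n) y = y"
    by (simp_all add: minimal_period_def funpow_prod_map)
  then obtain a b where a: "minimal_period S x a" and b: "minimal_period T y b"
    using minimal_period_exists[OF assms] by metis
  have "n = lcm a b"
    using minimal_period_unique[OF xy minimal_period_prod_map[OF a b]] .
  also have "\<dots> = a * b"
    using coprime_minimal_periods[OF a b] by (simp add: lcm_coprime)
  finally show ?thesis
    using a b that by blast
qed

lemma coprime_factorization_minimal_periods:
  "coprime_factorization {a. \<exists>x. minimal_period S x a} {b. \<exists>y. minimal_period T y b}"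
proof
  fix a b
  assume "a \<in> {a. \<exists>x. minimal_period S x a}" "b \<in> {b. \<exists>y. minimal_period T y b}"
  then show "coprime a b"
    using coprime_minimal_periods by blast
next
  fix n :: nat
  assume "0 < n"
  then obtain a b x y where "minimal_period S x a" "minimal_period T y b" "n = a * b"
    by (rule minimal_period_factorization)
  then show "\<exists>a\<in>{a. \<exists>x. minimal_period S x a}.
      \<exists>b\<in>{b. \<exists>y. minimal_period T y b}. n = a * b"
    by blast
qed

end

theorem proposition3p1:
  fixes S :: "'a \<Rightarrow> 'a" and T :: "'b \<Rightarrow> 'b"
  assumes "finite_periodic S" and "finite_periodic T"
    and "\<forall>n\<ge>1. orbit_count (prod_map S T) n = 1"
  shows "\<exists>P. P \<subseteq> {p. prime p} \<and>
           (\<forall>n\<ge>1. orbit_count T n = s_seq P n) \<and>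
           (\<forall>n\<ge>1. orbit_count S n = s_seq ({p. prime p} - P) n)"
proof -
  interpret unique_product_orbits S T
    using assms(3) by unfold_locales simp
  define A where "A = {a. \<exists>x. minimal_period S x a}"
  define B where "B = {b. \<exists>y. minimal_period T y b}"
  interpret coprime_factorization A B
    unfolding A_def B_def by (rule coprime_factorization_minimal_periods)
  interpret swapped: coprime_factorization B A
    by (rule coprime_factorization_swap) unfold_locales
  define P where "P = {p. prime p \<and> p \<in> A}"
  have "{p. prime p} - P = {p. prime p \<and> p \<in> B}"
    using prime_in_left_iff by (auto simp: P_def)
  then show ?thesis
    using orbit_count_left orbit_count_right right_mem_iff swapped.right_mem_iff
    by (intro exI[of _ P]) (auto simp: s_seq_def P_def A_def B_def)
qed

end
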